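(* In the setting below (Assumptions 1–8 hold, and $\mathbf{y}$, $\mathbf{y}_{rep}$ are independent), $\widetilde{\boldsymbol{\theta}}_n^s\to_p\boldsymbol{\theta}_n^p$, where $$\widetilde{\boldsymbol{\theta}}_n^s=\arg\max_{\boldsymbol{\theta}}\left\{\ln p(\mathbf{y}_{rep}|\boldsymbol{\theta})-\frac n2\left(\widehat{\boldsymbol{\theta}}_n(\mathbf{y})-\boldsymbol{\theta}\right)'(-\mathbf{H}_n^d)\left(\widehat{\boldsymbol{\theta}}_n(\mathbf{y})-\boldsymbol{\theta}\right)\right\}.$$
   Context: Setting: i.i.d. data $\mathbf{y}=(y_1,\dots,y_n)$ with density $g$; $\mathbf{y}_{rep}$ an independent copy with the same distribution; model $p(\mathbf{y}|\boldsymbol{\theta})=\prod_tp(y_t|\boldsymbol{\theta})$, $\boldsymbol{\theta}\in\boldsymbol{\Theta}\subseteq\mathbb{R}^P$, prior $p(\boldsymbol{\theta})$; $l_t(\boldsymbol{\theta})=\ln p(y_t|\boldsymbol{\theta})$. Expectations under $g$. $\widehat{\boldsymbol{\theta}}_n(\mathbf{y})=\arg\max\ln p(\mathbf{y}|\boldsymbol{\theta})$ (QML estimator). $\mathbf{B}_n(\boldsymbol{\theta})=\mathrm{Var}[n^{-1/2}\sum_t\nabla l_t(\boldsymbol{\theta})]$, $\mathbf{H}_n(\boldsymbol{\theta})=E[\frac1n\sum_t\nabla^2l_t(\boldsymbol{\theta})]$, $\boldsymbol{\theta}_n^p=\arg\min_{\boldsymbol{\theta}\in\boldsymbol{\Theta}}\frac1n\int\ln\frac{g(\mathbf{y})}{p(\mathbf{y}|\boldsymbol{\theta})}g(\mathbf{y})d\mathbf{y}$,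 $\mathbf{H}_n=\mathbf{H}_n(\boldsymbol{\theta}_n^p)$, and $\mathbf{H}_n^d$ is the diagonal matrix with the diagonal entries of $\mathbf{H}_n$. Assumptions: (1) $\boldsymbol{\Theta}$ compact. (2) $y_t$ i.i.d. (3) $l_t$ eight times differentiable a.s. (4) For $j=0,\dots,3$, $\|\nabla^jl_t(\boldsymbol{\theta})-\nabla^jl_t(\boldsymbol{\theta}')\|\le c_t^j(y_t)\|\boldsymbol{\theta}-\boldsymbol{\theta}'\|$ in probability, $c_t^j>0$, $\sup_tE\|c_t^j\|<\infty$, $\frac1n\sum_t(c_t^j-Ec_t^j)\to_p0$. (5) For $j=0,\dots,4$, $\sup_{\boldsymbol{\Theta}}\|\nabla^jl_t\|\le M_t(y_t)$, $\sup_tE\|M_t\|^{r+\delta}\le M<\infty$, some $\delta>0,r>2$. (6) $\boldsymbol{\theta}_n^p$ interior uniformly in $n$, and for all $\varepsilon>0$, $\limsup_n\sup_{\boldsymbol{\Theta}\setminus N(\boldsymbol{\theta}_n^p,\varepsilon)}\frac1n\sum_t\{El_t(\boldsymbol{\theta})-El_t(\boldsymbol{\theta}_n^p)\}<0$. (7) $\mathbf{H}_n(\boldsymbol{\theta}_n^p)$ negative definite, $\mathbf{B}_n(\boldsymbol{\theta}_n^p)$ positive definite, uniformly in $n$. (8) $p(\boldsymbol{\theta})$ thrice continuously differentiable, $0<p(\boldsymbol{\theta}_n^p)<\infty$ uniformly in $n$, posterior proper with finite second moment for large $n$. *)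

theory Defs
  imports "HOL-Probability.Probability"
begin

definition pdiff :: "'p::finite \<Rightarrow> (real^'p \<Rightarrow> real) \<Rightarrow> real^'p \<Rightarrow> real" where
  "pdiff i f \<theta> = deriv (\<lambda>h. f (\<theta> + h *\<^sub>R axis i 1)) 0"

text \<open>Iterated partial derivatives: pd f [i1,...,ik] is the k-th order partial
  derivative (the entries of the k-th derivative tensor nabla^k f).\<close>
fun pd :: "(real^'p::finite \<Rightarrow> real) \<Rightarrow> 'p list \<Rightarrow> real^'p \<Rightarrow> real" where
  "pd f [] = f"
| "pd f (i # is) = pdiff i (pd f is)"

definition tnorm :: "('p::finite list \<Rightarrow> real) \<Rightarrow> nat \<Rightarrow> real" where
  "tnorm T j = sqrt (\<Sum>is\<in>{is. length is = j}. (T is)\<^sup>2)"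

definition k_times_differentiable_on :: "nat \<Rightarrow> (real^'p::finite \<Rightarrow> real) \<Rightarrow> (real^'p) set \<Rightarrow> bool" where
  "k_times_differentiable_on k f S \<longleftrightarrow>
     (\<forall>is. length is < k \<longrightarrow> (\<forall>\<theta>\<in>S. pd f is differentiable (at \<theta>)))"

definition pos_def_mat :: "real^'n^'n \<Rightarrow> bool" where
  "pos_def_mat A \<longleftrightarrow> (\<forall>x. x \<noteq> 0 \<longrightarrow> 0 < x \<bullet> (A *v x))"

definition neg_def_mat :: "real^'n^'n \<Rightarrow> bool" where
  "neg_def_mat A \<longleftrightarrow> (\<forall>x. x \<noteq> 0 \<longrightarrow> x \<bullet> (A *v x) < 0)"

definition conv_in_prob :: "'w measure \<Rightarrow> (nat \<Rightarrow> 'w \<Rightarrow> 'b::metric_space) \<Rightarrow> 'b \<Rightarrow> bool" where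
  "conv_in_prob M X c \<longleftrightarrow>
     (\<forall>\<epsilon>>0. (\<lambda>n. measure M {\<omega>\<in>space M. \<epsilon> < dist (X n \<omega>) c}) \<longlonglongrightarrow> 0)"

definition loglik :: "(real^'p::finite \<Rightarrow> 'a \<Rightarrow> real) \<Rightarrow> real^'p \<Rightarrow> 'a \<Rightarrow> real" where
  "loglik pdens \<theta> y = ln (pdens \<theta> y)"

definition KL_div :: "'a measure \<Rightarrow> ('a \<Rightarrow> real) \<Rightarrow> (real^'p::finite \<Rightarrow> 'a \<Rightarrow> real) \<Rightarrow> real^'p \<Rightarrow> real" where
  "KL_div \<mu> g pdens \<theta> = (LINT y|\<mu>. g y * ln (g y / pdens \<theta> y))"

definition exp_hessian :: "'a measure \<Rightarrow> (real^'p::finite \<Rightarrow> 'a \<Rightarrow> real) \<Rightarrow> real^'p \<Rightarrow> real^'p^'p" where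
  "exp_hessian D l \<theta> = (\<chi> i j. LINT y|D. pd (\<lambda>\<theta>. l \<theta> y) [i, j] \<theta>)"

definition score_var :: "'a measure \<Rightarrow> (real^'p::finite \<Rightarrow> 'a \<Rightarrow> real) \<Rightarrow> real^'p \<Rightarrow> real^'p^'p" where
  "score_var D l \<theta> = (\<chi> i j. (LINT y|D. pd (\<lambda>\<theta>. l \<theta> y) [i] \<theta> * pd (\<lambda>\<theta>. l \<theta> y) [j] \<theta>)
       - (LINT y|D. pd (\<lambda>\<theta>. l \<theta> y) [i] \<theta>) * (LINT y|D. pd (\<lambda>\<theta>. l \<theta> y) [j] \<theta>))"

definition diag_part :: "real^'n^'n \<Rightarrow> real^'n^'n" where
  "diag_part A = (\<chi> i j. if i = j then A $ i $ i else 0)"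

end

theory Submission
  imports Defs
begin

text \<open>The log-likelihood averages \<open>Q(\<theta>) = (1/n) \<Sum>\<^sub>t l(\<theta>, y\<^sub>t)\<close> of \<open>y\<close> and of \<open>y\<^sub>r\<^sub>e\<^sub>p\<close>
  converge in probability to \<open>L(\<theta>) = E l(\<theta>, y)\<close> uniformly on the compact \<open>\<Theta>\<close>: pointwise by
  Chebyshev's inequality, and uniformly because \<open>Q\<close> and \<open>L\<close> are Lipschitz in \<open>\<theta>\<close> with constants
  \<open>(1/n) \<Sum>\<^sub>t c\<^sub>0(y\<^sub>t)\<close> (bounded in probability by Markov's inequality) and \<open>E c\<^sub>0\<close>, so that closeness
  on a finite net suffices. Where both averages are uniformly close to \<open>L\<close>, the QML estimator
  nearly maximises \<open>L\<close> and is therefore near \<open>\<theta>\<^sub>p\<close> by the identifiability condition; the penalty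
  \<open>(\<theta>\<^sub>h\<^sub>a\<^sub>t - \<theta>)'(-H\<^sup>d)(\<theta>\<^sub>h\<^sub>a\<^sub>t - \<theta>)/2\<close> is nonnegative (the diagonal of the negative definite \<open>H\<close> is
  negative) and small at \<open>\<theta> = \<theta>\<^sub>p\<close>, so the penalised maximiser also nearly maximises \<open>L\<close> and is
  near \<open>\<theta>\<^sub>p\<close>. Only Assumptions 1, 2, 4 and 5 (for \<open>j = 0\<close>), 6 and the negative definiteness in 7
  are needed.\<close>

definition well_separated_max :: "'b::metric_space set \<Rightarrow> ('b \<Rightarrow> real) \<Rightarrow> 'b \<Rightarrow> bool" where
  "well_separated_max K L \<theta>0 \<longleftrightarrow>
     \<theta>0 \<in> K \<and> (\<forall>\<epsilon>>0. \<exists>\<eta>>0. \<forall>\<theta>\<in>K. \<epsilon> \<le> dist \<theta> \<theta>0 \<longrightarrow> L \<theta> \<le> L \<theta>0 - \<eta>)"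

text \<open>Uniform convergence in probability is phrased through small exceptional sets, so that
  no measurability of the supremum over \<open>K\<close> is required.\<close>
definition unif_conv_in_prob ::
    "'w measure \<Rightarrow> (nat \<Rightarrow> 'w \<Rightarrow> 'b \<Rightarrow> real) \<Rightarrow> ('b \<Rightarrow> real) \<Rightarrow> 'b set \<Rightarrow> bool" where
  "unif_conv_in_prob M Z L K \<longleftrightarrow>
     (\<forall>s>0. \<forall>e>0. \<forall>\<^sub>F n in sequentially. \<exists>E\<in>sets M. measure M E < e \<and>
        (\<forall>\<omega>\<in>space M - E. \<forall>\<theta>\<in>K. \<bar>Z n \<omega> \<theta> - L \<theta>\<bar> < s))"

lemma tnorm_0: "tnorm T 0 = \<bar>T []\<bar>"
proof -
  have "{is. length is = 0} = {[]}" by auto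
  then show ?thesis unfolding tnorm_def by simp
qed

lemma quadratic_form_neg_diag_part_nonneg:
  fixes H :: "real^'n^'n"
  assumes "neg_def_mat H"
  shows "0 \<le> v \<bullet> ((- diag_part H) *v v)"
proof -
  have "H $ i $ i = axis i 1 \<bullet> (H *v axis i 1)" for i
  proof -
    have "\<And>P x::real. (if P then 1 else 0) * x = (if P then x else 0)"
      and "\<And>P x::real. x * (if P then 1 else 0) = (if P then x else 0)" by simp_all
    then show ?thesis
      by (simp add: inner_vec_def matrix_vector_mult_def axis_def cong: if_cong)
  qed
  then have diag_neg: "H $ i $ i < 0" for i
    using assms by (simp add: neg_def_mat_def axis_eq_0_iff)
  have "v \<bullet> ((- diag_part H) *v v) = (\<Sum>i\<in>UNIV. - H $ i $ i * (v $ i)\<^sup>2)"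
  proof -
    have "\<And>P x y::real. (if P then x else 0) * y = (if P then x * y else 0)" by simp
    then show ?thesis
      by (simp add: inner_vec_def matrix_vector_mult_def diag_part_def power2_eq_square
          cong: if_cong) (simp add: sum_negf algebra_simps)
  qed
  also have "\<dots> \<ge> 0"
    using diag_neg by (intro sum_nonneg) (simp add: mult_nonpos_nonneg less_imp_le)
  finally show ?thesis .
qed

lemma power2_le_1_plus_powr:
  fixes x p :: real
  assumes "0 \<le> x" "2 \<le> p"
  shows "x\<^sup>2 \<le> 1 + x powr p"
proof (cases "x \<le> 1")
  case True
  then have "x\<^sup>2 \<le> 1" using assms by (simp add: power_le_one)
  with powr_ge_zero[of x p] show ?thesis by linarith
next
  case False
  then have "x\<^sup>2 = x powr 2" using assms by (simp add: powr_numeral)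
  also have "\<dots> \<le> x powr p" using False assms by (intro powr_mono) auto
  finally show ?thesis by simp
qed

lemma mean_diff_abs_le:
  fixes f g c :: "nat \<Rightarrow> real"
  assumes "\<And>t. t < n \<Longrightarrow> \<bar>f t - g t\<bar> \<le> c t * d"
  shows "\<bar>(\<Sum>t<n. f t) / real n - (\<Sum>t<n. g t) / real n\<bar> \<le> (\<Sum>t<n. c t) / real n * d"
proof -
  have "\<bar>(\<Sum>t<n. f t) - (\<Sum>t<n. g t)\<bar> \<le> (\<Sum>t<n. \<bar>f t - g t\<bar>)"
    by (metis sum_abs sum_subtractf)
  also have "\<dots> \<le> (\<Sum>t<n. c t * d)"
    using assms by (intro sum_mono) auto
  also have "\<dots> = (\<Sum>t<n. c t) * d"
    by (simp add: sum_distrib_right)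
  finally have "\<bar>(\<Sum>t<n. f t) - (\<Sum>t<n. g t)\<bar> / real n \<le> (\<Sum>t<n. c t) * d / real n"
    by (rule divide_right_mono) simp
  then show ?thesis
    by (simp only: diff_divide_distrib[symmetric] abs_divide abs_of_nat times_divide_eq_left)
qed

lemma uniform_approx_from_net:
  fixes Q L :: "'b::metric_space \<Rightarrow> real"
  assumes net: "F \<subseteq> K" "K \<subseteq> (\<Union>\<phi>\<in>F. ball \<phi> \<delta>)"
    and close: "\<And>\<phi>. \<phi> \<in> F \<Longrightarrow> \<bar>Q \<phi> - L \<phi>\<bar> \<le> a"
    and Q_lip: "\<And>\<theta> \<theta>'. \<theta> \<in> K \<Longrightarrow> \<theta>' \<in> K \<Longrightarrow> \<bar>Q \<theta> - Q \<theta>'\<bar> \<le> C * dist \<theta> \<theta>'"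
    and L_lip: "\<And>\<theta> \<theta>'. \<theta> \<in> K \<Longrightarrow> \<theta>' \<in> K \<Longrightarrow> \<bar>L \<theta> - L \<theta>'\<bar> \<le> m * dist \<theta> \<theta>'"
    and "0 \<le> C" "0 \<le> m" "\<theta> \<in> K"
  shows "\<bar>Q \<theta> - L \<theta>\<bar> \<le> a + (C + m) * \<delta>"
proof -
  obtain \<phi> where \<phi>: "\<phi> \<in> F" "dist \<theta> \<phi> < \<delta>"
    using net(2) \<open>\<theta> \<in> K\<close> by (auto simp: dist_commute)
  have "\<phi> \<in> K" using net(1) \<phi>(1) by blast
  have "(C + m) * dist \<theta> \<phi> \<le> (C + m) * \<delta>"
    using \<phi>(2) assms(6,7) by (intro mult_left_mono) auto
  then show ?thesis
    using close[OF \<phi>(1)] Q_lip[OF \<open>\<theta> \<in> K\<close> \<open>\<phi> \<in> K\<close>] L_lip[OF \<open>\<theta> \<in> K\<close> \<open>\<phi> \<in> K\<close>]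
    by (simp add: algebra_simps)
qed

lemma product_integrable_if_square_integrable:
  fixes f g :: "'a \<Rightarrow> real"
  assumes "f \<in> borel_measurable M" "g \<in> borel_measurable M"
    and "integrable M (\<lambda>x. (f x)\<^sup>2)" "integrable M (\<lambda>x. (g x)\<^sup>2)"
  shows "integrable M (\<lambda>x. f x * g x)"
proof (rule Bochner_Integration.integrable_bound)
  show "integrable M (\<lambda>x. (f x)\<^sup>2 + (g x)\<^sup>2)" using assms by auto
  show "AE x in M. norm (f x * g x) \<le> norm ((f x)\<^sup>2 + (g x)\<^sup>2)"
  proof (intro AE_I2)
    fix x
    have "2 * \<bar>f x\<bar> * \<bar>g x\<bar> \<le> (f x)\<^sup>2 + (g x)\<^sup>2"
      using sum_squares_bound[of "\<bar>f x\<bar>" "\<bar>g x\<bar>"] by simp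
    moreover have "\<bar>f x\<bar> * \<bar>g x\<bar> \<le> 2 * \<bar>f x\<bar> * \<bar>g x\<bar>" by simp
    moreover have "norm ((f x)\<^sup>2 + (g x)\<^sup>2) = (f x)\<^sup>2 + (g x)\<^sup>2" by simp
    ultimately show "norm (f x * g x) \<le> norm ((f x)\<^sup>2 + (g x)\<^sup>2)"
      unfolding real_norm_def abs_mult by linarith
  qed
qed (use assms in simp)

lemma integral_diff_abs_le:
  fixes f g c :: "'a \<Rightarrow> real"
  assumes "integrable M f" "integrable M g" "integrable M c"
    and "AE x in M. \<bar>f x - g x\<bar> \<le> c x * d"
  shows "\<bar>(\<integral>x. f x \<partial>M) - (\<integral>x. g x \<partial>M)\<bar> \<le> (\<integral>x. c x \<partial>M) * d"
proof -
  have "\<bar>(\<integral>x. f x \<partial>M) - (\<integral>x. g x \<partial>M)\<bar> = \<bar>\<integral>x. f x - g x \<partial>M\<bar>"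
    using assms by simp
  also have "\<dots> \<le> (\<integral>x. \<bar>f x - g x\<bar> \<partial>M)"
    using integral_norm_bound[of M "\<lambda>x. f x - g x"] by simp
  also have "\<dots> \<le> (\<integral>x. c x * d \<partial>M)"
    using assms by (intro integral_mono_AE) auto
  finally show ?thesis by simp
qed

lemma (in prob_space) square_integrable_if_dominated_powr:
  fixes f G :: "'a \<Rightarrow> real"
  assumes "f \<in> borel_measurable M" "AE x in M. \<bar>f x\<bar> \<le> G x"
    and "integrable M (\<lambda>x. \<bar>G x\<bar> powr p)" "2 \<le> p"
  shows "integrable M (\<lambda>x. (f x)\<^sup>2)"
proof (rule Bochner_Integration.integrable_bound)
  show "integrable M (\<lambda>x. 1 + \<bar>G x\<bar> powr p)" using assms(3) by simp
  show "AE x in M. norm ((f x)\<^sup>2) \<le> norm (1 + \<bar>G x\<bar> powr p)"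
    using assms(2)
  proof eventually_elim
    case (elim x)
    then have "\<bar>f x\<bar> \<le> \<bar>G x\<bar>" by linarith
    then have "(f x)\<^sup>2 \<le> \<bar>G x\<bar>\<^sup>2" using power_mono[of "\<bar>f x\<bar>" "\<bar>G x\<bar>" 2] by simp
    also have "\<dots> \<le> 1 + \<bar>G x\<bar> powr p" using assms(4) by (intro power2_le_1_plus_powr) auto
    finally show ?case by simp
  qed
qed (use assms(1) in simp)

section \<open>Weak law of large numbers\<close>

lemma integrable_integral_comp_distr:
  fixes h :: "'b \<Rightarrow> real"
  assumes X: "X \<in> measurable M N" "distr M N X = P" and h: "h \<in> borel_measurable N" "integrable P h"
  shows "integrable M (\<lambda>\<omega>. h (X \<omega>))" "(\<integral>\<omega>. h (X \<omega>) \<partial>M) = (\<integral>y. h y \<partial>P)"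
  using integrable_distr_eq[OF X(1) h(1)] integral_distr[OF X(1) h(1)] X(2) h(2) by auto

lemma (in prob_space) expectation_mult_indep:
  fixes X :: "'i \<Rightarrow> 'a \<Rightarrow> 'b" and h :: "'b \<Rightarrow> real"
  assumes indep: "indep_vars (\<lambda>_. N) X I" and "i \<in> I" "j \<in> I" "i \<noteq> j"
    and h: "h \<in> borel_measurable N"
    and "integrable M (\<lambda>\<omega>. h (X i \<omega>))" "integrable M (\<lambda>\<omega>. h (X j \<omega>))"
  shows "expectation (\<lambda>\<omega>. h (X i \<omega>) * h (X j \<omega>))
    = expectation (\<lambda>\<omega>. h (X i \<omega>)) * expectation (\<lambda>\<omega>. h (X j \<omega>))"
proof -
  have "indep_vars (\<lambda>_. borel) (\<lambda>k \<omega>. h (X k \<omega>)) {i, j}"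
  proof (rule indep_vars_compose2[OF indep_vars_subset[OF indep]])
    show "{i, j} \<subseteq> I" using \<open>i \<in> I\<close> \<open>j \<in> I\<close> by auto
  qed (rule h)
  then have "expectation (\<lambda>\<omega>. \<Prod>k\<in>{i, j}. h (X k \<omega>)) = (\<Prod>k\<in>{i, j}. expectation (\<lambda>\<omega>. h (X k \<omega>)))"
    using assms(6,7) by (intro indep_vars_lebesgue_integral) auto
  then show ?thesis using \<open>i \<noteq> j\<close> by simp
qed

lemma (in prob_space) second_moment_sum_uncorrelated:
  fixes Z :: "nat \<Rightarrow> 'a \<Rightarrow> real"
  assumes Z: "\<And>t. Z t \<in> borel_measurable M" "\<And>t. integrable M (\<lambda>\<omega>. (Z t \<omega>)\<^sup>2)"
    and second_moment: "\<And>t. expectation (\<lambda>\<omega>. (Z t \<omega>)\<^sup>2) = V"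
    and uncorrelated: "\<And>s t. s \<noteq> t \<Longrightarrow> expectation (\<lambda>\<omega>. Z s \<omega> * Z t \<omega>) = 0"
  shows "integrable M (\<lambda>\<omega>. (\<Sum>t<n. Z t \<omega>)\<^sup>2)"
    and "expectation (\<lambda>\<omega>. (\<Sum>t<n. Z t \<omega>)\<^sup>2) = real n * V"
proof -
  have square_sum: "(\<lambda>\<omega>. (\<Sum>t<n. Z t \<omega>)\<^sup>2) = (\<lambda>\<omega>. \<Sum>s<n. \<Sum>t<n. Z s \<omega> * Z t \<omega>)"
    by (simp add: power2_eq_square sum_product)
  have products: "integrable M (\<lambda>\<omega>. Z s \<omega> * Z t \<omega>)" for s t
    using Z by (intro product_integrable_if_square_integrable)
  show "integrable M (\<lambda>\<omega>. (\<Sum>t<n. Z t \<omega>)\<^sup>2)"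
    unfolding square_sum using products by auto
  have "expectation (\<lambda>\<omega>. (\<Sum>t<n. Z t \<omega>)\<^sup>2)
      = (\<Sum>s<n. \<Sum>t<n. expectation (\<lambda>\<omega>. Z s \<omega> * Z t \<omega>))"
    unfolding square_sum using products
    by (simp add: Bochner_Integration.integral_sum Bochner_Integration.integrable_sum)
  also have "\<dots> = (\<Sum>s<n. \<Sum>t<n. if s = t then V else 0)"
    using second_moment uncorrelated by (intro sum.cong refl) (auto simp: power2_eq_square)
  also have "\<dots> = real n * V" by simp
  finally show "expectation (\<lambda>\<omega>. (\<Sum>t<n. Z t \<omega>)\<^sup>2) = real n * V" .
qed

lemma (in prob_space) sample_mean_uncorrelated_Chebyshev:
  fixes Z :: "nat \<Rightarrow> 'a \<Rightarrow> real"
  assumes Z: "\<And>t. Z t \<in> borel_measurable M" "\<And>t. integrable M (\<lambda>\<omega>. (Z t \<omega>)\<^sup>2)"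
    and second_moment: "\<And>t. expectation (\<lambda>\<omega>. (Z t \<omega>)\<^sup>2) = V"
    and uncorrelated: "\<And>s t. s \<noteq> t \<Longrightarrow> expectation (\<lambda>\<omega>. Z s \<omega> * Z t \<omega>) = 0"
    and "0 < a" "0 < n"
  shows "measure M {\<omega>\<in>space M. a < \<bar>(\<Sum>t<n. Z t \<omega>) / real n\<bar>} \<le> V / (a\<^sup>2 * real n)"
proof -
  note sum = second_moment_sum_uncorrelated[where Z = Z and n = n, OF Z second_moment uncorrelated]
  note Z(1)[measurable]
  have S: "{\<omega>\<in>space M. real n * a \<le> \<bar>\<Sum>t<n. Z t \<omega>\<bar>} \<in> sets M" by measurable
  have "{\<omega>\<in>space M. a < \<bar>(\<Sum>t<n. Z t \<omega>) / real n\<bar>} \<subseteq> {\<omega>\<in>space M. real n * a \<le> \<bar>\<Sum>t<n. Z t \<omega>\<bar>}"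
    using \<open>0 < n\<close> by (auto simp: abs_divide pos_less_divide_eq mult.commute)
  then have "measure M {\<omega>\<in>space M. a < \<bar>(\<Sum>t<n. Z t \<omega>) / real n\<bar>}
      \<le> measure M {\<omega>\<in>space M. real n * a \<le> \<bar>\<Sum>t<n. Z t \<omega>\<bar>}"
    using S by (rule finite_measure_mono)
  also have "\<dots> \<le> expectation (\<lambda>\<omega>. (\<Sum>t<n. Z t \<omega>)\<^sup>2) / (real n * a)\<^sup>2"
  proof (rule second_moment_method)
    show "(\<lambda>\<omega>. \<Sum>t<n. Z t \<omega>) \<in> borel_measurable M" by measurable
  qed (use sum(1) \<open>0 < a\<close> \<open>0 < n\<close> in auto)
  also have "\<dots> = V / (a\<^sup>2 * real n)"
    using sum(2) \<open>0 < a\<close> \<open>0 < n\<close> by (simp add: power2_eq_square)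
  finally show ?thesis .
qed

lemma (in prob_space) conv_in_prob_if_measure_le_inverse:
  fixes X :: "nat \<Rightarrow> 'a \<Rightarrow> 'b::metric_space"
  assumes "\<And>a n. 0 < a \<Longrightarrow> 0 < n \<Longrightarrow>
    measure M {\<omega>\<in>space M. a < dist (X n \<omega>) c} \<le> B / (a\<^sup>2 * real n)"
  shows "conv_in_prob M X c"
  unfolding conv_in_prob_def
proof (intro allI impI)
  fix a :: real assume "0 < a"
  have lim: "(\<lambda>n. B / (a\<^sup>2 * real n)) \<longlonglongrightarrow> 0"
    using \<open>0 < a\<close> by (intro tendsto_divide_0[OF tendsto_const] filterlim_at_top_imp_at_infinity
        filterlim_tendsto_pos_mult_at_top[OF tendsto_const] filterlim_real_sequentially) auto
  show "(\<lambda>n. measure M {\<omega>\<in>space M. a < dist (X n \<omega>) c}) \<longlonglongrightarrow> 0"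
  proof (rule tendsto_sandwich[OF _ _ tendsto_const lim])
    show "\<forall>\<^sub>F n in sequentially. measure M {\<omega>\<in>space M. a < dist (X n \<omega>) c} \<le> B / (a\<^sup>2 * real n)"
      using eventually_gt_at_top[of "0::nat"] by eventually_elim (rule assms[OF \<open>0 < a\<close>])
  qed simp
qed

lemma (in prob_space) wlln_conv_in_prob:
  fixes X :: "'i \<Rightarrow> 'a \<Rightarrow> 'b" and idx :: "nat \<Rightarrow> 'i" and f :: "'b \<Rightarrow> real"
  assumes indep: "indep_vars (\<lambda>_. \<mu>) X I" and idx: "inj idx" "range idx \<subseteq> I"
    and distr: "\<And>t. distr M \<mu> (X (idx t)) = P"
    and f: "f \<in> borel_measurable \<mu>" "integrable P (\<lambda>y. (f y)\<^sup>2)"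
  shows "conv_in_prob M (\<lambda>n \<omega>. (\<Sum>t<n. f (X (idx t) \<omega>)) / real n) (\<integral>y. f y \<partial>P)"
proof -
  have X[measurable]: "X (idx t) \<in> measurable M \<mu>" for t
    using indep idx(2) unfolding indep_vars_def by auto
  note f(1)[measurable]
  interpret P: prob_space P using prob_space_distr[OF X] distr by metis
  have "f \<in> borel_measurable P" using f(1) distr[of 0] by (metis measurable_distr_eq1)
  then have "integrable P f" using f(2) by (rule P.square_integrable_imp_integrable)
  define m where "m = (\<integral>y. f y \<partial>P)"
  define V where "V = (\<integral>y. (f y - m)\<^sup>2 \<partial>P)"
  define W where "W = (\<lambda>i \<omega>. f (X i \<omega>) - m)"
  note moments = integrable_integral_comp_distr[OF X distr]
  have "integrable P (\<lambda>y. (f y - m)\<^sup>2)"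
    using f(2) \<open>integrable P f\<close> unfolding power2_eq_square ring_distribs
    by (intro Bochner_Integration.integrable_diff) auto
  from moments[OF _ this] have W_sq:
    "integrable M (\<lambda>\<omega>. (W (idx t) \<omega>)\<^sup>2)" "expectation (\<lambda>\<omega>. (W (idx t) \<omega>)\<^sup>2) = V" for t
    by (simp_all add: W_def V_def)
  from moments[OF f(1) \<open>integrable P f\<close>]
  have W_mean: "integrable M (W (idx t))" "expectation (W (idx t)) = 0" for t
    by (simp_all add: W_def m_def prob_space)
  have W_meas: "W (idx t) \<in> borel_measurable M" for t
    unfolding W_def by measurable
  have "idx t \<in> I" for t using idx(2) by auto
  moreover have "(\<lambda>y. f y - m) \<in> borel_measurable \<mu>" by measurable
  ultimately have uncorrelated: "expectation (\<lambda>\<omega>. W (idx s) \<omega> * W (idx t) \<omega>) = 0"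
    if "s \<noteq> t" for s t
    using expectation_mult_indep[OF indep, where i = "idx s" and j = "idx t" and h = "\<lambda>y. f y - m"]
      W_mean inj_eq[OF idx(1)] that
    by (simp add: W_def)
  show ?thesis
    unfolding m_def[symmetric]
  proof (rule conv_in_prob_if_measure_le_inverse)
    fix a :: real and n :: nat assume "0 < a" "0 < n"
    then have "dist ((\<Sum>t<n. f (X (idx t) \<omega>)) / real n) m = \<bar>(\<Sum>t<n. W (idx t) \<omega>) / real n\<bar>" for \<omega>
      by (simp add: W_def dist_real_def sum_subtractf field_simps)
    moreover have "measure M {\<omega>\<in>space M. a < \<bar>(\<Sum>t<n. W (idx t) \<omega>) / real n\<bar>} \<le> V / (a\<^sup>2 * real n)"
      by (rule sample_mean_uncorrelated_Chebyshev[where Z = "\<lambda>t. W (idx t)"])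
        (simp_all add: W_meas W_sq uncorrelated \<open>0 < a\<close> \<open>0 < n\<close>)
    ultimately show "measure M {\<omega>\<in>space M. a < dist ((\<Sum>t<n. f (X (idx t) \<omega>)) / real n) m}
        \<le> V / (a\<^sup>2 * real n)"
      by simp
  qed
qed

section \<open>Uniform law of large numbers on a compact set\<close>

lemma (in prob_space) sample_mean_Markov:
  fixes X :: "nat \<Rightarrow> 'a \<Rightarrow> 'b" and c :: "'b \<Rightarrow> real"
  assumes X: "\<And>t. X t \<in> measurable M \<mu>" "\<And>t. distr M \<mu> (X t) = P"
    and c: "c \<in> borel_measurable \<mu>" "integrable P c" "\<And>y. y \<in> space \<mu> \<Longrightarrow> 0 \<le> c y"
    and "0 < C" "0 < n"
  shows "measure M {\<omega>\<in>space M. C \<le> (\<Sum>t<n. c (X t \<omega>)) / real n} \<le> (\<integral>y. c y \<partial>P) / C"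
proof -
  note X(1)[measurable] c(1)[measurable]
  have int: "integrable M (\<lambda>\<omega>. c (X t \<omega>))" "expectation (\<lambda>\<omega>. c (X t \<omega>)) = (\<integral>y. c y \<partial>P)" for t
    using integrable_integral_comp_distr[OF X(1)[of t] X(2)[of t] c(1,2)] by auto
  have "measure M {\<omega>\<in>space M. C \<le> (\<Sum>t<n. c (X t \<omega>)) / real n}
      \<le> expectation (\<lambda>\<omega>. (\<Sum>t<n. c (X t \<omega>)) / real n) / C"
  proof (rule integral_Markov_inequality_measure[OF _ sets.top])
    show "integrable M (\<lambda>\<omega>. (\<Sum>t<n. c (X t \<omega>)) / real n)" using int by auto
    show "AE \<omega> in M. 0 \<le> (\<Sum>t<n. c (X t \<omega>)) / real n"
      using c(3) measurable_space[OF X(1)] by (intro AE_I2 divide_nonneg_nonneg sum_nonneg) auto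
  qed fact
  also have "expectation (\<lambda>\<omega>. (\<Sum>t<n. c (X t \<omega>)) / real n) = (\<integral>y. c y \<partial>P)"
    using \<open>0 < n\<close> int by (simp add: Bochner_Integration.integral_sum)
  finally show ?thesis .
qed

lemma sample_mean_uniform_approx:
  fixes y :: "nat \<Rightarrow> 'b" and l :: "'c::metric_space \<Rightarrow> 'b \<Rightarrow> real" and L :: "'c \<Rightarrow> real"
  assumes net: "F \<subseteq> K" "K \<subseteq> (\<Union>\<phi>\<in>F. ball \<phi> \<delta>)"
    and close: "\<And>\<phi>. \<phi> \<in> F \<Longrightarrow> \<bar>(\<Sum>t<n. l \<phi> (y t)) / real n - L \<phi>\<bar> \<le> a"
    and lip: "\<And>t \<theta> \<theta>'. \<theta> \<in> K \<Longrightarrow> \<theta>' \<in> K \<Longrightarrow> \<bar>l \<theta> (y t) - l \<theta>' (y t)\<bar> \<le> c (y t) * dist \<theta> \<theta>'"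
    and L_lip: "\<And>\<theta> \<theta>'. \<theta> \<in> K \<Longrightarrow> \<theta>' \<in> K \<Longrightarrow> \<bar>L \<theta> - L \<theta>'\<bar> \<le> m * dist \<theta> \<theta>'"
    and c: "\<And>t. 0 \<le> c (y t)" "(\<Sum>t<n. c (y t)) / real n \<le> C"
    and "0 \<le> m" "0 \<le> \<delta>" "\<theta> \<in> K"
  shows "\<bar>(\<Sum>t<n. l \<theta> (y t)) / real n - L \<theta>\<bar> \<le> a + (C + m) * \<delta>"
proof -
  have "\<bar>(\<Sum>t<n. l \<theta> (y t)) / real n - L \<theta>\<bar> \<le> a + ((\<Sum>t<n. c (y t)) / real n + m) * \<delta>"
  proof (rule uniform_approx_from_net[OF net close])
    show "\<bar>(\<Sum>t<n. l \<theta> (y t)) / real n - (\<Sum>t<n. l \<theta>' (y t)) / real n\<bar>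
        \<le> (\<Sum>t<n. c (y t)) / real n * dist \<theta> \<theta>'" if "\<theta> \<in> K" "\<theta>' \<in> K" for \<theta> \<theta>'
      using lip[OF that] by (rule mean_diff_abs_le)
    show "0 \<le> (\<Sum>t<n. c (y t)) / real n"
      using c(1) by (intro divide_nonneg_nonneg sum_nonneg) auto
  qed (use L_lip assms(8,10) in auto)
  also have "\<dots> \<le> a + (C + m) * \<delta>"
    using c(2) \<open>0 \<le> \<delta>\<close> by (intro add_left_mono mult_right_mono) auto
  finally show ?thesis .
qed

lemma (in prob_space) sample_mean_uniform_approx_outside:
  fixes X :: "nat \<Rightarrow> 'a \<Rightarrow> 'b" and l :: "'c::metric_space \<Rightarrow> 'b \<Rightarrow> real" and c :: "'b \<Rightarrow> real"
  assumes X: "\<And>t. X t \<in> measurable M \<mu>" "\<And>t. distr M \<mu> (X t) = P"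
    and l: "\<And>\<theta>. \<theta> \<in> K \<Longrightarrow> l \<theta> \<in> borel_measurable \<mu>" "\<And>\<theta>. \<theta> \<in> K \<Longrightarrow> integrable P (l \<theta>)"
    and c: "c \<in> borel_measurable \<mu>" "integrable P c" "\<And>y. y \<in> space \<mu> \<Longrightarrow> 0 \<le> c y"
    and lip: "AE y in P. \<forall>\<theta>\<in>K. \<forall>\<theta>'\<in>K. \<bar>l \<theta> y - l \<theta>' y\<bar> \<le> c y * dist \<theta> \<theta>'"
    and F: "F \<subseteq> K" "finite F" "K \<subseteq> (\<Union>\<phi>\<in>F. ball \<phi> \<delta>)" and "0 \<le> \<delta>" "0 < C" "0 < n"
  shows "\<exists>E\<in>sets M. measure M E \<le> (\<integral>y. c y \<partial>P) / C + (\<Sum>\<phi>\<in>F. measure M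
       {\<omega>\<in>space M. a < dist ((\<Sum>t<n. l \<phi> (X t \<omega>)) / real n) (\<integral>y. l \<phi> y \<partial>P)}) \<and>
     (\<forall>\<omega>\<in>space M - E. \<forall>\<theta>\<in>K.
       \<bar>(\<Sum>t<n. l \<theta> (X t \<omega>)) / real n - (\<integral>y. l \<theta> y \<partial>P)\<bar> \<le> a + (C + (\<integral>y. c y \<partial>P)) * \<delta>)"
proof -
  let ?m = "\<integral>y. c y \<partial>P"
  define Big where "Big = {\<omega>\<in>space M. C \<le> (\<Sum>t<n. c (X t \<omega>)) / real n}"
  define Far where "Far \<phi> = {\<omega>\<in>space M. a < dist ((\<Sum>t<n. l \<phi> (X t \<omega>)) / real n) (\<integral>y. l \<phi> y \<partial>P)}"
    for \<phi>
  have "AE \<omega> in M. \<forall>\<theta>\<in>K. \<forall>\<theta>'\<in>K. \<bar>l \<theta> (X t \<omega>) - l \<theta>' (X t \<omega>)\<bar> \<le> c (X t \<omega>) * dist \<theta> \<theta>'" for t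
    by (rule AE_distrD[OF X(1)]) (unfold X(2), fact lip)
  then have "AE \<omega> in M. \<forall>t. \<forall>\<theta>\<in>K. \<forall>\<theta>'\<in>K. \<bar>l \<theta> (X t \<omega>) - l \<theta>' (X t \<omega>)\<bar> \<le> c (X t \<omega>) * dist \<theta> \<theta>'"
    by (simp add: AE_all_countable)
  then obtain N where N: "N \<in> null_sets M" "\<And>\<omega> t \<theta> \<theta>'. \<omega> \<in> space M - N \<Longrightarrow> \<theta> \<in> K \<Longrightarrow> \<theta>' \<in> K \<Longrightarrow>
      \<bar>l \<theta> (X t \<omega>) - l \<theta>' (X t \<omega>)\<bar> \<le> c (X t \<omega>) * dist \<theta> \<theta>'"
    by (auto elim!: AE_E3)
  define E where "E = Big \<union> (\<Union>\<phi>\<in>F. Far \<phi>) \<union> N"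
  have Big: "Big \<in> sets M"
  proof -
    note c(1)[measurable] X(1)[measurable]
    show ?thesis unfolding Big_def by measurable
  qed
  have Far: "Far \<phi> \<in> sets M" if "\<phi> \<in> F" for \<phi>
  proof -
    note l(1)[OF subsetD[OF F(1) that], measurable] X(1)[measurable]
    show ?thesis unfolding Far_def by measurable
  qed
  have Big_Far: "Big \<union> (\<Union>\<phi>\<in>F. Far \<phi>) \<in> sets M"
    using Big Far F(2) by (intro sets.Un sets.finite_UN) auto
  have "E \<in> sets M" unfolding E_def by (intro sets.Un Big_Far null_setsD2[OF N(1)])
  have "measure M E = measure M (Big \<union> (\<Union>\<phi>\<in>F. Far \<phi>))"
    unfolding E_def using Big_Far N(1) by (rule measure_Un_null_set)
  moreover have "\<dots> \<le> measure M Big + measure M (\<Union>\<phi>\<in>F. Far \<phi>)"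
    using Big Far F(2) by (intro measure_Un_le sets.finite_UN) auto
  moreover have "measure M (\<Union>\<phi>\<in>F. Far \<phi>) \<le> (\<Sum>\<phi>\<in>F. measure M (Far \<phi>))"
    using Far F(2) by (intro measure_UNION_le) auto
  moreover have "measure M Big \<le> ?m / C"
    unfolding Big_def using X c \<open>0 < C\<close> \<open>0 < n\<close> by (rule sample_mean_Markov)
  ultimately have "measure M E \<le> ?m / C + (\<Sum>\<phi>\<in>F. measure M (Far \<phi>))"
    by linarith
  moreover have "\<bar>(\<Sum>t<n. l \<theta> (X t \<omega>)) / real n - (\<integral>y. l \<theta> y \<partial>P)\<bar> \<le> a + (C + ?m) * \<delta>"
    if \<omega>: "\<omega> \<in> space M - E" and "\<theta> \<in> K" for \<omega> \<theta>
  proof (rule sample_mean_uniform_approx[where y = "\<lambda>t. X t \<omega>" and c = c, OF F(1,3)])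
    show "\<bar>(\<Sum>t<n. l \<phi> (X t \<omega>)) / real n - (\<integral>y. l \<phi> y \<partial>P)\<bar> \<le> a" if "\<phi> \<in> F" for \<phi>
      using \<omega> that by (auto simp: E_def Far_def dist_real_def)
    show "\<bar>(\<integral>y. l \<theta> y \<partial>P) - (\<integral>y. l \<theta>' y \<partial>P)\<bar> \<le> ?m * dist \<theta> \<theta>'" if "\<theta> \<in> K" "\<theta>' \<in> K" for \<theta> \<theta>'
      using l(2) that c(2) lip by (intro integral_diff_abs_le) (auto elim!: eventually_mono)
    show "(\<Sum>t<n. c (X t \<omega>)) / real n \<le> C" using \<omega> by (auto simp: E_def Big_def)
    show "0 \<le> ?m" using c(3) X(2)[of 0] by (intro integral_nonneg_AE AE_I2) (metis space_distr)
  qed (use \<omega> N(2) c(3) measurable_space[OF X(1)] \<open>0 \<le> \<delta>\<close> \<open>\<theta> \<in> K\<close> in \<open>auto simp: E_def\<close>)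
  ultimately show ?thesis using \<open>E \<in> sets M\<close> unfolding Far_def by blast
qed

lemma (in prob_space) unif_conv_in_prob_sample_mean:
  fixes X :: "nat \<Rightarrow> 'a \<Rightarrow> 'b" and l :: "'c::metric_space \<Rightarrow> 'b \<Rightarrow> real" and c :: "'b \<Rightarrow> real"
  assumes X: "\<And>t. X t \<in> measurable M \<mu>" "\<And>t. distr M \<mu> (X t) = P"
    and K: "compact K"
    and l: "\<And>\<theta>. \<theta> \<in> K \<Longrightarrow> l \<theta> \<in> borel_measurable \<mu>" "\<And>\<theta>. \<theta> \<in> K \<Longrightarrow> integrable P (l \<theta>)"
    and pointwise: "\<And>\<theta>. \<theta> \<in> K \<Longrightarrow>
      conv_in_prob M (\<lambda>n \<omega>. (\<Sum>t<n. l \<theta> (X t \<omega>)) / real n) (\<integral>y. l \<theta> y \<partial>P)"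
    and c: "c \<in> borel_measurable \<mu>" "integrable P c" "\<And>y. y \<in> space \<mu> \<Longrightarrow> 0 \<le> c y"
    and lip: "AE y in P. \<forall>\<theta>\<in>K. \<forall>\<theta>'\<in>K. \<bar>l \<theta> y - l \<theta>' y\<bar> \<le> c y * dist \<theta> \<theta>'"
  shows "unif_conv_in_prob M (\<lambda>n \<omega> \<theta>. (\<Sum>t<n. l \<theta> (X t \<omega>)) / real n) (\<lambda>\<theta>. \<integral>y. l \<theta> y \<partial>P) K"
  unfolding unif_conv_in_prob_def
proof (intro allI impI)
  fix s e :: real assume "0 < s" "0 < e"
  let ?m = "\<integral>y. c y \<partial>P"
  define C where "C = 2 * (?m + 1) / e"
  define \<delta> where "\<delta> = s / (2 * (C + ?m + 1))"
  have "0 \<le> ?m"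
    using c(3) X(2)[of 0] by (intro integral_nonneg_AE AE_I2) (metis space_distr)
  then have C: "0 < C" "?m / C < e / 2"
    using \<open>0 < e\<close> by (auto simp: C_def field_simps)
  have pos: "0 < C + ?m + 1" using C(1) \<open>0 \<le> ?m\<close> by linarith
  then have "0 < \<delta>" unfolding \<delta>_def using \<open>0 < s\<close> by simp
  have "(C + ?m) * \<delta> = s / 2 * ((C + ?m) / (C + ?m + 1))"
    unfolding \<delta>_def by (simp add: field_simps)
  also have "\<dots> < s / 2 * 1"
    using pos \<open>0 < s\<close> by (intro mult_strict_left_mono) auto
  finally have \<delta>: "s / 2 + (C + ?m) * \<delta> < s" by simp
  obtain F where F: "F \<subseteq> K" "finite F" "K \<subseteq> (\<Union>\<phi>\<in>F. ball \<phi> \<delta>)"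
    using compactE_image[OF K, of K "\<lambda>\<phi>. ball \<phi> \<delta>"] \<open>0 < \<delta>\<close> by force
  have "(\<lambda>n. measure M {\<omega>\<in>space M. s / 2 < dist ((\<Sum>t<n. l \<phi> (X t \<omega>)) / real n) (\<integral>y. l \<phi> y \<partial>P)}) \<longlonglongrightarrow> 0"
    if "\<phi> \<in> F" for \<phi>
    using \<open>0 < s\<close> F(1) that by (intro pointwise[unfolded conv_in_prob_def, rule_format]) auto
  then have "(\<lambda>n. \<Sum>\<phi>\<in>F. measure M {\<omega>\<in>space M. s / 2 < dist ((\<Sum>t<n. l \<phi> (X t \<omega>)) / real n) (\<integral>y. l \<phi> y \<partial>P)}) \<longlonglongrightarrow> 0"
    by (rule tendsto_null_sum)
  then have "\<forall>\<^sub>F n in sequentially. (\<Sum>\<phi>\<in>F. measure M {\<omega>\<in>space M. s / 2 < dist ((\<Sum>t<n. l \<phi> (X t \<omega>)) / real n) (\<integral>y. l \<phi> y \<partial>P)}) < e / 2"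
    using \<open>0 < e\<close> by (intro order_tendstoD(2)) auto
  then show "\<forall>\<^sub>F n in sequentially. \<exists>E\<in>sets M. measure M E < e \<and>
      (\<forall>\<omega>\<in>space M - E. \<forall>\<theta>\<in>K. \<bar>(\<Sum>t<n. l \<theta> (X t \<omega>)) / real n - (\<integral>y. l \<theta> y \<partial>P)\<bar> < s)"
    using eventually_gt_at_top[of "0::nat"]
  proof eventually_elim
    case (elim n)
    obtain E where "E \<in> sets M" and "measure M E \<le> ?m / C + (\<Sum>\<phi>\<in>F. measure M {\<omega>\<in>space M. s / 2 < dist ((\<Sum>t<n. l \<phi> (X t \<omega>)) / real n) (\<integral>y. l \<phi> y \<partial>P)})"
      and approx: "\<forall>\<omega>\<in>space M - E. \<forall>\<theta>\<in>K.
        \<bar>(\<Sum>t<n. l \<theta> (X t \<omega>)) / real n - (\<integral>y. l \<theta> y \<partial>P)\<bar> \<le> s / 2 + (C + ?m) * \<delta>"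
      using sample_mean_uniform_approx_outside[where X = X and a = "s / 2",
          OF X l c lip F less_imp_le[OF \<open>0 < \<delta>\<close>] C(1) elim(2)] by blast
    moreover have "measure M E < e" using calculation(2) C(2) elim(1) by linarith
    moreover have "\<bar>(\<Sum>t<n. l \<theta> (X t \<omega>)) / real n - (\<integral>y. l \<theta> y \<partial>P)\<bar> < s"
      if "\<omega> \<in> space M - E" "\<theta> \<in> K" for \<omega> \<theta>
      using approx[rule_format, OF that] \<delta> by linarith
    ultimately show ?case by blast
  qed
qed

lemma (in prob_space) unif_conv_in_prob_sample_mean_indep:
  fixes X :: "'i \<Rightarrow> 'a \<Rightarrow> 'b" and idx :: "nat \<Rightarrow> 'i" and l :: "'c::metric_space \<Rightarrow> 'b \<Rightarrow> real"
  assumes indep: "indep_vars (\<lambda>_. \<mu>) X I" and idx: "inj idx" "range idx \<subseteq> I"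
    and distr: "\<And>t. distr M \<mu> (X (idx t)) = P"
    and K: "compact K"
    and l: "\<And>\<theta>. \<theta> \<in> K \<Longrightarrow> l \<theta> \<in> borel_measurable \<mu>" "\<And>\<theta>. \<theta> \<in> K \<Longrightarrow> integrable P (\<lambda>y. (l \<theta> y)\<^sup>2)"
    and c: "c \<in> borel_measurable \<mu>" "integrable P c" "\<And>y. y \<in> space \<mu> \<Longrightarrow> 0 \<le> c y"
    and lip: "AE y in P. \<forall>\<theta>\<in>K. \<forall>\<theta>'\<in>K. \<bar>l \<theta> y - l \<theta>' y\<bar> \<le> c y * dist \<theta> \<theta>'"
  shows "unif_conv_in_prob M (\<lambda>n \<omega> \<theta>. (\<Sum>t<n. l \<theta> (X (idx t) \<omega>)) / real n) (\<lambda>\<theta>. \<integral>y. l \<theta> y \<partial>P) K"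
proof -
  have X: "X (idx t) \<in> measurable M \<mu>" for t
    using indep idx(2) unfolding indep_vars_def by auto
  interpret P: prob_space P using prob_space_distr[OF X] distr by metis
  have "integrable P (l \<theta>)" if "\<theta> \<in> K" for \<theta>
  proof (rule P.square_integrable_imp_integrable)
    show "l \<theta> \<in> borel_measurable P" using l(1)[OF that] distr[of 0] by (metis measurable_distr_eq1)
  qed (rule l(2)[OF that])
  with l show ?thesis
    using wlln_conv_in_prob[OF indep idx distr] X distr K c lip
    by (intro unif_conv_in_prob_sample_mean[where X = "\<lambda>t. X (idx t)"]) auto
qed

section \<open>Penalized maximizers\<close>

lemma penalized_argmax_near:
  fixes L :: "'b::metric_space \<Rightarrow> real" and pen :: "'b \<Rightarrow> 'b \<Rightarrow> real"
  assumes sep: "well_separated_max K L \<theta>0"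
    and pen: "\<And>h \<theta>. 0 \<le> pen h \<theta>" "isCont (\<lambda>h. pen h \<theta>0) \<theta>0" "pen \<theta>0 \<theta>0 = 0"
    and "0 < \<epsilon>"
  obtains s where "0 < s"
    "\<And>Qy Qr h \<theta>. h \<in> K \<Longrightarrow> \<theta> \<in> K \<Longrightarrow> \<forall>\<theta>'\<in>K. Qy \<theta>' \<le> Qy h \<Longrightarrow>
      \<forall>\<theta>'\<in>K. Qr \<theta>' - pen h \<theta>' \<le> Qr \<theta> - pen h \<theta> \<Longrightarrow>
      \<forall>\<theta>'\<in>K. \<bar>Qy \<theta>' - L \<theta>'\<bar> < s \<Longrightarrow> \<forall>\<theta>'\<in>K. \<bar>Qr \<theta>' - L \<theta>'\<bar> < s \<Longrightarrow> dist \<theta> \<theta>0 < \<epsilon>"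
proof -
  have "\<theta>0 \<in> K" using sep by (simp add: well_separated_max_def)
  obtain \<eta> where "0 < \<eta>" and \<eta>: "\<And>\<theta>. \<theta> \<in> K \<Longrightarrow> \<epsilon> \<le> dist \<theta> \<theta>0 \<Longrightarrow> L \<theta> \<le> L \<theta>0 - \<eta>"
    using sep \<open>0 < \<epsilon>\<close> unfolding well_separated_max_def by blast
  have "0 < \<eta> / 2" using \<open>0 < \<eta>\<close> by simp
  from pen(2)[unfolded continuous_at_eps_delta, rule_format, OF this] obtain \<rho> where "0 < \<rho>"
    and \<rho>': "\<And>h. dist h \<theta>0 < \<rho> \<Longrightarrow> dist (pen h \<theta>0) (pen \<theta>0 \<theta>0) < \<eta> / 2"
    by blast
  have \<rho>: "pen h \<theta>0 < \<eta> / 2" if "dist h \<theta>0 < \<rho>" for h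
    using \<rho>'[OF that] abs_ge_self[of "pen h \<theta>0"] unfolding dist_real_def pen(3) diff_zero by linarith
  obtain \<eta>' where "0 < \<eta>'" and \<eta>': "\<And>\<theta>. \<theta> \<in> K \<Longrightarrow> \<rho> \<le> dist \<theta> \<theta>0 \<Longrightarrow> L \<theta> \<le> L \<theta>0 - \<eta>'"
    using sep \<open>0 < \<rho>\<close> unfolding well_separated_max_def by blast
  txt \<open>The bound through \<open>\<eta>'\<close> puts \<open>h\<close> within \<open>\<rho>\<close> of \<open>\<theta>0\<close>, where the penalty is below \<open>\<eta>/2\<close>;
    the one through \<open>\<eta>\<close> then puts \<open>\<theta>\<close> within \<open>\<epsilon>\<close>.\<close>
  define s where "s = min (\<eta> / 8) (\<eta>' / 4)"
  have s: "s \<le> \<eta> / 8" "s \<le> \<eta>' / 4" by (auto simp: s_def)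
  show ?thesis
  proof
    show "0 < s" using \<open>0 < \<eta>\<close> \<open>0 < \<eta>'\<close> by (simp add: s_def)
    fix Qy Qr h \<theta>
    assume "h \<in> K" "\<theta> \<in> K" and max_y: "\<forall>\<theta>'\<in>K. Qy \<theta>' \<le> Qy h"
      and max_r: "\<forall>\<theta>'\<in>K. Qr \<theta>' - pen h \<theta>' \<le> Qr \<theta> - pen h \<theta>"
      and close_y: "\<forall>\<theta>'\<in>K. \<bar>Qy \<theta>' - L \<theta>'\<bar> < s" and close_r: "\<forall>\<theta>'\<in>K. \<bar>Qr \<theta>' - L \<theta>'\<bar> < s"
    have "Qy \<theta>0 \<le> Qy h" "\<bar>Qy \<theta>0 - L \<theta>0\<bar> < s" "\<bar>Qy h - L h\<bar> < s"
      using max_y close_y \<open>h \<in> K\<close> \<open>\<theta>0 \<in> K\<close> by auto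
    then have "L \<theta>0 - 2 * s < L h" by (simp only: abs_less_iff) linarith
    then have "\<not> \<rho> \<le> dist h \<theta>0"
      using \<eta>'[OF \<open>h \<in> K\<close>] s(2) \<open>0 < \<eta>'\<close> by linarith
    then have "pen h \<theta>0 < \<eta> / 2" using \<rho> by simp
    moreover have "Qr \<theta>0 - pen h \<theta>0 \<le> Qr \<theta> - pen h \<theta>" "\<bar>Qr \<theta>0 - L \<theta>0\<bar> < s" "\<bar>Qr \<theta> - L \<theta>\<bar> < s"
      using max_r close_r \<open>\<theta> \<in> K\<close> \<open>\<theta>0 \<in> K\<close> by auto
    ultimately have "L \<theta>0 - 2 * s - \<eta> / 2 < L \<theta>"
      using pen(1)[of h \<theta>] by (simp only: abs_less_iff) linarith
    then have "\<not> \<epsilon> \<le> dist \<theta> \<theta>0"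
      using \<eta>[OF \<open>\<theta> \<in> K\<close>] s(1) \<open>0 < \<eta>\<close> by linarith
    then show "dist \<theta> \<theta>0 < \<epsilon>" by simp
  qed
qed

lemma (in prob_space) conv_in_prob_if_small_exceptional:
  fixes X :: "nat \<Rightarrow> 'a \<Rightarrow> 'b::metric_space"
  assumes "\<And>\<epsilon> e. 0 < \<epsilon> \<Longrightarrow> 0 < e \<Longrightarrow> \<forall>\<^sub>F n in sequentially. \<exists>E\<in>sets M. measure M E < e \<and>
      (\<forall>\<omega>\<in>space M - E. dist (X n \<omega>) c < \<epsilon>)"
  shows "conv_in_prob M X c"
  unfolding conv_in_prob_def
proof (intro allI impI)
  fix \<epsilon> :: real assume "0 < \<epsilon>"
  show "(\<lambda>n. measure M {\<omega>\<in>space M. \<epsilon> < dist (X n \<omega>) c}) \<longlonglongrightarrow> 0"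
  proof (rule tendstoI)
    fix e :: real assume "0 < e"
    from assms[OF \<open>0 < \<epsilon>\<close> this]
    show "\<forall>\<^sub>F n in sequentially. dist (measure M {\<omega>\<in>space M. \<epsilon> < dist (X n \<omega>) c}) 0 < e"
    proof eventually_elim
      case (elim n)
      then obtain E where E: "E \<in> sets M" "measure M E < e" "\<forall>\<omega>\<in>space M - E. dist (X n \<omega>) c < \<epsilon>"
        by blast
      then have "{\<omega>\<in>space M. \<epsilon> < dist (X n \<omega>) c} \<subseteq> E" by force
      then have "measure M {\<omega>\<in>space M. \<epsilon> < dist (X n \<omega>) c} \<le> measure M E"
        using E(1) by (rule finite_measure_mono)
      then show ?case using E(2) by simp
    qed
  qed
qed

lemma (in prob_space) conv_in_prob_penalized_argmax:
  fixes Qy Qr :: "nat \<Rightarrow> 'a \<Rightarrow> 'b::metric_space \<Rightarrow> real" and h \<theta>n :: "nat \<Rightarrow> 'a \<Rightarrow> 'b"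
  assumes sep: "well_separated_max K L \<theta>0"
    and pen: "\<And>h \<theta>. 0 \<le> pen h \<theta>" "isCont (\<lambda>h. pen h \<theta>0) \<theta>0" "pen \<theta>0 \<theta>0 = 0"
    and conv: "unif_conv_in_prob M Qy L K" "unif_conv_in_prob M Qr L K"
    and max: "\<forall>\<^sub>F n in sequentially. \<forall>\<omega>\<in>space M. h n \<omega> \<in> K \<and> \<theta>n n \<omega> \<in> K \<and>
      (\<forall>\<theta>\<in>K. Qy n \<omega> \<theta> \<le> Qy n \<omega> (h n \<omega>)) \<and>
      (\<forall>\<theta>\<in>K. Qr n \<omega> \<theta> - pen (h n \<omega>) \<theta> \<le> Qr n \<omega> (\<theta>n n \<omega>) - pen (h n \<omega>) (\<theta>n n \<omega>))"
  shows "conv_in_prob M \<theta>n \<theta>0"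
proof (rule conv_in_prob_if_small_exceptional)
  fix \<epsilon> e :: real assume "0 < \<epsilon>" "0 < e"
  obtain s where "0 < s" and near: "\<And>Qy Qr h \<theta>. h \<in> K \<Longrightarrow> \<theta> \<in> K \<Longrightarrow> \<forall>\<theta>'\<in>K. Qy \<theta>' \<le> Qy h \<Longrightarrow>
      \<forall>\<theta>'\<in>K. Qr \<theta>' - pen h \<theta>' \<le> Qr \<theta> - pen h \<theta> \<Longrightarrow>
      \<forall>\<theta>'\<in>K. \<bar>Qy \<theta>' - L \<theta>'\<bar> < s \<Longrightarrow> \<forall>\<theta>'\<in>K. \<bar>Qr \<theta>' - L \<theta>'\<bar> < s \<Longrightarrow> dist \<theta> \<theta>0 < \<epsilon>"
    using penalized_argmax_near[where pen = pen, OF sep pen \<open>0 < \<epsilon>\<close>] by blast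
  have "0 < e / 2" using \<open>0 < e\<close> by simp
  note close = conv(1)[unfolded unif_conv_in_prob_def, rule_format, OF \<open>0 < s\<close> this]
    conv(2)[unfolded unif_conv_in_prob_def, rule_format, OF \<open>0 < s\<close> this]
  from max close show "\<forall>\<^sub>F n in sequentially. \<exists>E\<in>sets M. measure M E < e \<and>
      (\<forall>\<omega>\<in>space M - E. dist (\<theta>n n \<omega>) \<theta>0 < \<epsilon>)"
  proof eventually_elim
    case (elim n)
    then obtain Ey Er where E: "Ey \<in> sets M" "Er \<in> sets M" "measure M Ey < e / 2" "measure M Er < e / 2"
      and good: "\<forall>\<omega>\<in>space M - Ey. \<forall>\<theta>\<in>K. \<bar>Qy n \<omega> \<theta> - L \<theta>\<bar> < s"
        "\<forall>\<omega>\<in>space M - Er. \<forall>\<theta>\<in>K. \<bar>Qr n \<omega> \<theta> - L \<theta>\<bar> < s"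
      by blast
    have "dist (\<theta>n n \<omega>) \<theta>0 < \<epsilon>" if "\<omega> \<in> space M - (Ey \<union> Er)" for \<omega>
      using elim(1) good that by (intro near[of "h n \<omega>" "\<theta>n n \<omega>" "Qy n \<omega>" "Qr n \<omega>"]) auto
    moreover have "measure M (Ey \<union> Er) < e"
      using measure_Un_le[OF E(1,2)] E(3,4) by linarith
    ultimately show ?case using E(1,2) by blast
  qed
qed

lemma penalized_max_divide:
  fixes x x' q q' :: real
  assumes "x - real n / 2 * q \<le> x' - real n / 2 * q'" "0 < n"
  shows "x / real n - q / 2 \<le> x' / real n - q' / 2"
proof -
  have "(x - real n / 2 * q) / real n \<le> (x' - real n / 2 * q') / real n"
    using assms by (intro divide_right_mono) auto
  moreover have "(z - real n / 2 * w) / real n = z / real n - w / 2" for z w :: real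
    using assms(2) by (simp add: field_simps)
  ultimately show ?thesis by simp
qed

theorem lemmaA1:
  fixes M :: "'w measure" and \<mu> :: "'a measure"
    and Y Yrep :: "nat \<Rightarrow> 'w \<Rightarrow> 'a"
    and g :: "'a \<Rightarrow> real"
    and pdens :: "real^'p::finite \<Rightarrow> 'a \<Rightarrow> real"
    and pr :: "real^'p \<Rightarrow> real"
    and \<Theta> :: "(real^'p) set"
    and \<theta>p :: "real^'p"
    and \<theta>hat \<theta>til :: "nat \<Rightarrow> 'w \<Rightarrow> real^'p"
    and c :: "nat \<Rightarrow> 'a \<Rightarrow> real" and Mf :: "'a \<Rightarrow> real"
    and Mb r \<delta> :: real
  assumes M: "prob_space M"
    and meas: "\<forall>t. Y t \<in> measurable M \<mu> \<and> Yrep t \<in> measurable M \<mu>"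
    and indep: "prob_space.indep_vars M (\<lambda>_. \<mu>)
                  (\<lambda>(b, t). if b then Y t else Yrep t) (UNIV :: (bool \<times> nat) set)"
    and ident: "\<forall>t. distr M \<mu> (Y t) = density \<mu> g \<and> distr M \<mu> (Yrep t) = density \<mu> g"
    and g: "g \<in> borel_measurable \<mu>" "\<forall>y\<in>space \<mu>. 0 \<le> g y"
    and model: "\<forall>\<theta>\<in>\<Theta>. pdens \<theta> \<in> borel_measurable \<mu> \<and> (\<forall>y\<in>space \<mu>. 0 < pdens \<theta> y)
                    \<and> integral\<^sup>L \<mu> (pdens \<theta>) = 1"
    and pseudo_true: "\<theta>p \<in> \<Theta>" "\<forall>\<theta>\<in>\<Theta>. KL_div \<mu> g pdens \<theta>p \<le> KL_div \<mu> g pdens \<theta>"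
    and QML: "\<forall>n. \<forall>\<omega>\<in>space M. \<theta>hat n \<omega> \<in> \<Theta> \<and>
                (\<forall>\<theta>\<in>\<Theta>. (\<Sum>t<n. loglik pdens \<theta> (Y t \<omega>)) \<le> (\<Sum>t<n. loglik pdens (\<theta>hat n \<omega>) (Y t \<omega>)))"
    and til_meas: "\<forall>n. \<theta>til n \<in> borel_measurable M"
    and til_max: "\<forall>n. \<forall>\<omega>\<in>space M. \<theta>til n \<omega> \<in> \<Theta> \<and>
                (\<forall>\<theta>\<in>\<Theta>. (\<Sum>t<n. loglik pdens \<theta> (Yrep t \<omega>))
                   - real n / 2 * ((\<theta>hat n \<omega> - \<theta>) \<bullet> ((- diag_part (exp_hessian (density \<mu> g) (loglik pdens) \<theta>p)) *v (\<theta>hat n \<omega> - \<theta>)))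
                 \<le> (\<Sum>t<n. loglik pdens (\<theta>til n \<omega>) (Yrep t \<omega>))
                   - real n / 2 * ((\<theta>hat n \<omega> - \<theta>til n \<omega>) \<bullet> ((- diag_part (exp_hessian (density \<mu> g) (loglik pdens) \<theta>p)) *v (\<theta>hat n \<omega> - \<theta>til n \<omega>))))"
    and A1: "compact \<Theta>"
    and A3: "AE y in density \<mu> g. k_times_differentiable_on 8 (\<lambda>\<theta>. loglik pdens \<theta> y) \<Theta>"
    and A4: "\<forall>j\<le>3. (\<forall>y\<in>space \<mu>. 0 < c j y) \<and> integrable (density \<mu> g) (c j)
              \<and> (AE y in density \<mu> g. \<forall>\<theta>\<in>\<Theta>. \<forall>\<theta>'\<in>\<Theta>.
                    tnorm (\<lambda>is. pd (\<lambda>\<theta>. loglik pdens \<theta> y) is \<theta> - pd (\<lambda>\<theta>. loglik pdens \<theta> y) is \<theta>') j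
                      \<le> c j y * norm (\<theta> - \<theta>'))
              \<and> conv_in_prob M (\<lambda>n \<omega>. (\<Sum>t<n. c j (Y t \<omega>) - (LINT y|density \<mu> g. c j y)) / real n) 0"
    and A5: "0 < \<delta>" "2 < r"
            "\<forall>j\<le>4. AE y in density \<mu> g. \<forall>\<theta>\<in>\<Theta>. tnorm (\<lambda>is. pd (\<lambda>\<theta>. loglik pdens \<theta> y) is \<theta>) j \<le> Mf y"
            "integrable (density \<mu> g) (\<lambda>y. \<bar>Mf y\<bar> powr (r + \<delta>))"
            "(LINT y|density \<mu> g. \<bar>Mf y\<bar> powr (r + \<delta>)) \<le> Mb"
    and A6: "\<theta>p \<in> interior \<Theta>"
            "\<forall>\<epsilon>>0. \<exists>\<eta>>0. \<forall>\<theta>\<in>\<Theta>. \<epsilon> \<le> dist \<theta> \<theta>p \<longrightarrow>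
                 (LINT y|density \<mu> g. loglik pdens \<theta> y) \<le> (LINT y|density \<mu> g. loglik pdens \<theta>p y) - \<eta>"
    and A7: "neg_def_mat (exp_hessian (density \<mu> g) (loglik pdens) \<theta>p)" "pos_def_mat (score_var (density \<mu> g) (loglik pdens) \<theta>p)"
    and A8: "k_times_differentiable_on 3 pr \<Theta>"
            "\<forall>is. length is \<le> 3 \<longrightarrow> (\<forall>\<theta>\<in>\<Theta>. isCont (pd pr is) \<theta>)"
            "\<forall>\<theta>\<in>\<Theta>. 0 \<le> pr \<theta>" "0 < pr \<theta>p"
            "eventually (\<lambda>n. AE \<omega> in M.
                 set_integrable lborel \<Theta> (\<lambda>\<theta>. exp (\<Sum>t<n. loglik pdens \<theta> (Y t \<omega>)) * pr \<theta>)
               \<and> 0 < (LINT \<theta>:\<Theta>|lborel. exp (\<Sum>t<n. loglik pdens \<theta> (Y t \<omega>)) * pr \<theta>)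
               \<and> set_integrable lborel \<Theta> (\<lambda>\<theta>. (norm \<theta>)\<^sup>2 * (exp (\<Sum>t<n. loglik pdens \<theta> (Y t \<omega>)) * pr \<theta>)))
             sequentially"
  shows "conv_in_prob M \<theta>til \<theta>p"
proof -
  interpret prob_space M by (rule M)
  define P where "P = density \<mu> g"
  define L where "L \<theta> = (\<integral>y. loglik pdens \<theta> y \<partial>P)" for \<theta>
  define pen where
    "pen h \<theta> = (h - \<theta>) \<bullet> ((- diag_part (exp_hessian P (loglik pdens) \<theta>p)) *v (h - \<theta>)) / 2"
    for h \<theta> :: "real^'p"
  define Z where "Z = (\<lambda>(b, t). if b then Y t else Yrep t)"
  define Q where "Q b n \<omega> \<theta> = (\<Sum>t<n. loglik pdens \<theta> (Z (b, t) \<omega>)) / real n" for b n \<omega> \<theta>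
  have Z: "Z (b, t) \<in> measurable M \<mu>" "distr M \<mu> (Z (b, t)) = P" for b t
    using meas ident by (simp_all add: Z_def P_def)
  interpret P: prob_space P using prob_space_distr[OF Z(1)] Z(2) by metis
  have l_meas: "(\<lambda>y. loglik pdens \<theta> y) \<in> borel_measurable \<mu>" if "\<theta> \<in> \<Theta>" for \<theta>
  proof -
    have [measurable]: "pdens \<theta> \<in> borel_measurable \<mu>" using model that by blast
    show ?thesis unfolding loglik_def by measurable
  qed
  have l_sq: "integrable P (\<lambda>y. (loglik pdens \<theta> y)\<^sup>2)" if "\<theta> \<in> \<Theta>" for \<theta>
  proof (rule P.square_integrable_if_dominated_powr)
    show "(\<lambda>y. loglik pdens \<theta> y) \<in> borel_measurable P"
      using l_meas[OF that] by (simp add: P_def cong: measurable_cong_sets)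
    show "AE y in P. \<bar>loglik pdens \<theta> y\<bar> \<le> Mf y"
      using A5(3)[rule_format, of 0] that unfolding P_def by (auto simp: tnorm_0 elim!: eventually_mono)
    show "integrable P (\<lambda>y. \<bar>Mf y\<bar> powr (r + \<delta>))" using A5(4) by (simp add: P_def)
  qed (use A5(1,2) in simp)
  have c0: "c 0 \<in> borel_measurable \<mu>" "integrable P (c 0)" "\<And>y. y \<in> space \<mu> \<Longrightarrow> 0 \<le> c 0 y"
    using A4[rule_format, of 0] borel_measurable_integrable[of P "c 0"]
    by (auto simp: P_def less_imp_le cong: measurable_cong_sets)
  have "AE y in P. \<forall>\<theta>\<in>\<Theta>. \<forall>\<theta>'\<in>\<Theta>. \<bar>loglik pdens \<theta> y - loglik pdens \<theta>' y\<bar> \<le> c 0 y * norm (\<theta> - \<theta>')"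
    using A4[rule_format, OF le0, THEN conjunct2, THEN conjunct2, THEN conjunct1]
    unfolding P_def tnorm_0 pd.simps(1) .
  then have lip: "AE y in P. \<forall>\<theta>\<in>\<Theta>. \<forall>\<theta>'\<in>\<Theta>.
      \<bar>loglik pdens \<theta> y - loglik pdens \<theta>' y\<bar> \<le> c 0 y * dist \<theta> \<theta>'"
    by (simp add: dist_norm)
  have ulln: "unif_conv_in_prob M (Q b) L \<Theta>" for b
    unfolding Q_def L_def
  proof (rule unif_conv_in_prob_sample_mean_indep[where idx = "Pair b", OF _ _ _ _ A1 l_meas l_sq c0 lip])
    show "indep_vars (\<lambda>_. \<mu>) Z UNIV" using indep by (simp add: Z_def)
  qed (simp_all add: Z(2) inj_on_def)
  have max: "\<forall>\<^sub>F n in sequentially. \<forall>\<omega>\<in>space M. \<theta>hat n \<omega> \<in> \<Theta> \<and> \<theta>til n \<omega> \<in> \<Theta> \<and>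
      (\<forall>\<theta>\<in>\<Theta>. Q True n \<omega> \<theta> \<le> Q True n \<omega> (\<theta>hat n \<omega>)) \<and>
      (\<forall>\<theta>\<in>\<Theta>. Q False n \<omega> \<theta> - pen (\<theta>hat n \<omega>) \<theta> \<le> Q False n \<omega> (\<theta>til n \<omega>) - pen (\<theta>hat n \<omega>) (\<theta>til n \<omega>))"
    using eventually_gt_at_top[of "0::nat"]
  proof eventually_elim
    case (elim n)
    then show ?case
      using QML til_max penalized_max_divide
      by (auto simp: Q_def Z_def pen_def P_def intro: divide_right_mono)
  qed
  show ?thesis
  proof (rule conv_in_prob_penalized_argmax[OF _ _ _ _ ulln ulln max])
    show "well_separated_max \<Theta> L \<theta>p"
      using pseudo_true(1) A6(2) by (simp add: well_separated_max_def L_def P_def)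
    show "0 \<le> pen h \<theta>" for h \<theta>
      using quadratic_form_neg_diag_part_nonneg[OF A7(1)] by (simp add: pen_def P_def)
    show "isCont (\<lambda>h. pen h \<theta>p) \<theta>p" unfolding pen_def
      by (intro continuous_intros bounded_linear.continuous[OF matrix_vector_mul_bounded_linear]) simp
  qed (simp add: pen_def)
qed

end
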